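(* Let $(\mathcal{K},[\cdot,\cdot])$ be a Krein space with fundamental symmetry $J$, let $\{k_n\}_{n\in\mathbb{N}}$ be a frame for the Krein space $\mathcal{K}$, and let $S$ be its frame operator. Then for every $k\in\mathcal{K}$, $$k=\sum_{n\in\mathbb{N}}[k_n,k]\,S^{-1}k_n\qquad\text{and}\qquad k=\sum_{n\in\mathbb{N}}[S^{-1}k_n,k]\,k_n,$$ and both series converge unconditionally (in the norm $\|\cdot\|_J$).
   Context: A Krein space $(\mathcal{K},[\cdot,\cdot])$ has a fundamental decomposition $\mathcal{K}=\mathcal{K}_+\oplus\mathcal{K}_-$ and fundamental symmetry $J(k^++k^-)=k^+-k^-$, such that $[h,k]_J:=[h,Jk]$ makes $\mathcal{K}$ a Hilbert space; $\|k\|_J:=\sqrt{[k,k]_J}$. A countable sequence $\{k_n\}$ is a frame for the Krein space $\mathcal{K}$ if there are $0<A\leq B<\infty$ with $A\|k\|_J^2\leq\sum_n|[k_n,k]|^2\leq B\|k\|_J^2$ for all $k$. Let $\mathfrak{k}_2(\mathbb{N})$ be $\ell_2(\mathbb{N})$ equipped with a Krein space inner product $[\cdot,\cdot]$ whose fundamental symmetry $\tilde J$ satisfies that $[\cdot,\cdot]_{\tilde J}$ equals the standard inner product of $\ell_2(\mathbb{N})$. The pre-frame operator is $T:\mathfrak{k}_2(\mathbb{N})\to\mathcal{K}$, $T(\alpha_n)_n=\sum_n\alpha_nk_n$, with Krein-space adjoint $T^*$ (i.e. $[T^*h,a]=[h,Ta]$), and the frame operator is $S:=T\tilde JT^*$;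 one has $Sk=\sum_n[k_n,k]k_n$ for $k\in\mathcal{K}$. The operator $S$ is self-adjoint with respect to $[\cdot,\cdot]$ and invertible with bounded inverse (established in the paper prior to this theorem). *)

theory Defs
  imports "HOL-Analysis.Analysis"
begin

text \<open>The library has no class of complex vector spaces, so the Krein space is modelled
  as a real Banach space 'a together with an explicit complex scalar multiplication
  smul (extending the real one), an indefinite inner product ip (conjugate-linear in
  the first and linear in the second argument, so that S k = sum of [k_n,k] k_n is linear)
  and a fundamental symmetry J such that [h,k]_J = [h, J k] is a Hilbert inner product
  inducing the norm of 'a.\<close>

definition krein_space ::
  "(complex \<Rightarrow> 'a::{real_normed_vector,banach} \<Rightarrow> 'a) \<Rightarrow> ('a \<Rightarrow> 'a \<Rightarrow> complex) \<Rightarrow> ('a \<Rightarrow> 'a) \<Rightarrow> bool"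
where
  "krein_space smul ip J \<longleftrightarrow>
     (\<forall>x. smul 1 x = x) \<and>
     (\<forall>a b x. smul (a * b) x = smul a (smul b x)) \<and>
     (\<forall>a b x. smul (a + b) x = smul a x + smul b x) \<and>
     (\<forall>a x y. smul a (x + y) = smul a x + smul a y) \<and>
     (\<forall>r x. smul (complex_of_real r) x = r *\<^sub>R x) \<and>
     (\<forall>x y z. ip x (y + z) = ip x y + ip x z) \<and>
     (\<forall>x c y. ip x (smul c y) = c * ip x y) \<and>
     (\<forall>x y. ip y x = cnj (ip x y)) \<and>
     (\<forall>x y. J (x + y) = J x + J y) \<and>
     (\<forall>c x. J (smul c x) = smul c (J x)) \<and>
     (\<forall>x. J (J x) = x) \<and>
     (\<forall>x y. ip (J x) y = ip x (J y)) \<and>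
     (\<forall>x. ip x (J x) = complex_of_real ((norm x)\<^sup>2))"

definition krein_frame ::
  "('a::real_normed_vector \<Rightarrow> 'a \<Rightarrow> complex) \<Rightarrow> (nat \<Rightarrow> 'a) \<Rightarrow> bool"
where
  "krein_frame ip kn \<longleftrightarrow>
     (\<exists>A B. 0 < A \<and> A \<le> B \<and>
        (\<forall>k. summable (\<lambda>n. (cmod (ip (kn n) k))\<^sup>2) \<and>
             A * (norm k)\<^sup>2 \<le> (\<Sum>n. (cmod (ip (kn n) k))\<^sup>2) \<and>
             (\<Sum>n. (cmod (ip (kn n) k))\<^sup>2) \<le> B * (norm k)\<^sup>2))"

definition frame_operator ::
  "(complex \<Rightarrow> 'a::{real_normed_vector} \<Rightarrow> 'a) \<Rightarrow> ('a \<Rightarrow> 'a \<Rightarrow> complex) \<Rightarrow> (nat \<Rightarrow> 'a) \<Rightarrow> 'a \<Rightarrow> 'a"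
where
  "frame_operator smul ip kn k = infsum (\<lambda>n. smul (ip (kn n) k) (kn n)) UNIV"

end

theory Submission imports Defs begin

text \<open>The frame operator S is the synthesis of the analysis coefficients [k_n,k], so
  [k, S k] = \<Sum>|[k_n,k]|^2 lies between A\<parallel>k\<parallel>^2 and B\<parallel>k\<parallel>^2, while the upper frame bound
  (Bessel's inequality) gives \<parallel>S k\<parallel>^2 \<le> B [k, S k]. Hence w \<mapsto> w - (1/B) J S w is a contraction
  with constant sqrt (1 - A/B), so J S and therefore S are surjective; the lower bound
  \<parallel>S k\<parallel> \<ge> A\<parallel>k\<parallel> makes S injective with bounded inverse. Applying the bounded operator S\<inverse>
  to the unconditionally convergent series S k = \<Sum>[k_n,k] k_n gives the first expansion; the
  series for S (S\<inverse> k) together with the self-adjointness of S\<inverse> gives the second.\<close>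

lemma summable_on_Cauchy:
  fixes f :: "'i \<Rightarrow> 'b::banach"
  assumes tail: "\<And>e. 0 < e \<Longrightarrow>
    \<exists>F0. finite F0 \<and> F0 \<subseteq> A \<and> (\<forall>F. finite F \<and> F \<subseteq> A - F0 \<longrightarrow> norm (sum f F) < e)"
  shows "f summable_on A"
proof -
  have "\<exists>P. eventually P (finite_subsets_at_top A) \<and>
          (\<forall>F F'. P F \<and> P F' \<longrightarrow> dist (sum f F) (sum f F') < e)" if "0 < e" for e
  proof -
    obtain F0 where F0: "finite F0" "F0 \<subseteq> A"
      and small: "\<And>F. finite F \<Longrightarrow> F \<subseteq> A - F0 \<Longrightarrow> norm (sum f F) < e / 2"
      using tail[of "e / 2"] \<open>0 < e\<close> by auto
    define P where "P F \<longleftrightarrow> finite F \<and> F0 \<subseteq> F \<and> F \<subseteq> A" for F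
    have "eventually P (finite_subsets_at_top A)"
      unfolding P_def eventually_finite_subsets_at_top using F0 by blast
    moreover have "dist (sum f F) (sum f F') < e" if "P F" "P F'" for F F'
    proof -
      have split: "sum f G = sum f (G - F0) + sum f F0" if "P G" for G
        using that unfolding P_def by (simp add: sum.subset_diff)
      have "dist (sum f F) (sum f F') = norm (sum f (F - F0) - sum f (F' - F0))"
        by (simp add: dist_norm split[OF \<open>P F\<close>] split[OF \<open>P F'\<close>])
      also have "\<dots> \<le> norm (sum f (F - F0)) + norm (sum f (F' - F0))"
        by (rule norm_triangle_ineq4)
      also have "\<dots> < e / 2 + e / 2"
        using that unfolding P_def by (intro add_strict_mono small) auto
      finally show ?thesis by simp
    qed
    ultimately show ?thesis by blast
  qed
  then have "cauchy_filter (filtermap (sum f) (finite_subsets_at_top A))"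
    by (simp add: cauchy_filter_metric_filtermap)
  then obtain L where "(sum f \<longlongrightarrow> L) (finite_subsets_at_top A)"
    using complete_uniform[where S = UNIV] complete_UNIV by (force simp add: filterlim_def)
  then show ?thesis
    unfolding summable_on_def has_sum_def by blast
qed

lemma nonneg_summable_on_tail_less:
  fixes g :: "'i \<Rightarrow> real"
  assumes "g summable_on A" and "\<And>x. x \<in> A \<Longrightarrow> 0 \<le> g x" and "0 < e"
  shows "\<exists>F0. finite F0 \<and> F0 \<subseteq> A \<and> (\<forall>F. finite F \<and> F \<subseteq> A - F0 \<longrightarrow> sum g F < e)"
proof -
  obtain F0 where F0: "finite F0" "F0 \<subseteq> A" and close: "dist (sum g F0) (infsum g A) \<le> e / 2"
    using infsum_finite_approximation[OF assms(1), of "e / 2"] \<open>0 < e\<close> by auto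
  have "sum g F < e" if "finite F" "F \<subseteq> A - F0" for F
  proof -
    have "sum g F0 + sum g F = sum g (F0 \<union> F)"
      using that F0 by (subst sum.union_disjoint) auto
    also have "\<dots> \<le> infsum g A"
      by (rule finite_sum_le_infsum) (use assms that F0 in auto)
    finally show ?thesis
      using abs_le_D2[OF close[unfolded dist_real_def]] \<open>0 < e\<close> by linarith
  qed
  with F0 show ?thesis by blast
qed

lemma summable_on_if_norm_sum_power2_le:
  fixes f :: "'i \<Rightarrow> 'b::banach" and g :: "'i \<Rightarrow> real"
  assumes "g summable_on A" and "\<And>x. x \<in> A \<Longrightarrow> 0 \<le> g x" and "0 \<le> C"
    and bound: "\<And>F. finite F \<Longrightarrow> F \<subseteq> A \<Longrightarrow> (norm (sum f F))\<^sup>2 \<le> C * sum g F"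
  shows "f summable_on A"
proof (rule summable_on_Cauchy)
  fix e :: real assume "0 < e"
  then obtain F0 where F0: "finite F0" "F0 \<subseteq> A"
    and small: "\<forall>F. finite F \<and> F \<subseteq> A - F0 \<longrightarrow> sum g F < e\<^sup>2 / (C + 1)"
    using nonneg_summable_on_tail_less[OF assms(1,2), of "e\<^sup>2 / (C + 1)"] \<open>0 \<le> C\<close> by auto
  have "norm (sum f F) < e" if "finite F" "F \<subseteq> A - F0" for F
  proof -
    have "0 \<le> sum g F"
      using that assms(2) by (intro sum_nonneg) auto
    have "(norm (sum f F))\<^sup>2 \<le> C * sum g F"
      using bound that by auto
    also have "\<dots> \<le> (C + 1) * sum g F"
      using \<open>0 \<le> sum g F\<close> by (simp add: distrib_right)
    also have "\<dots> < (C + 1) * (e\<^sup>2 / (C + 1))"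
      using small that \<open>0 \<le> C\<close> by (intro mult_strict_left_mono) auto
    also have "\<dots> = e\<^sup>2"
      using \<open>0 \<le> C\<close> by simp
    finally show ?thesis
      using \<open>0 < e\<close> by (simp add: power2_less_imp_less)
  qed
  with F0 show "\<exists>F0. finite F0 \<and> F0 \<subseteq> A \<and> (\<forall>F. finite F \<and> F \<subseteq> A - F0 \<longrightarrow> norm (sum f F) < e)"
    by blast
qed

lemma norm_infsum_le_if_norm_sum_le:
  fixes f :: "'i \<Rightarrow> 'b::real_normed_vector"
  assumes "f summable_on A" and "\<And>F. finite F \<Longrightarrow> F \<subseteq> A \<Longrightarrow> norm (sum f F) \<le> C"
  shows "norm (infsum f A) \<le> C"
proof (rule Lim_norm_ubound)
  show "(sum f \<longlongrightarrow> infsum f A) (finite_subsets_at_top A)"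
    using has_sum_infsum[OF assms(1)] unfolding has_sum_def .
  show "eventually (\<lambda>F. norm (sum f F) \<le> C) (finite_subsets_at_top A)"
    by (rule eventually_finite_subsets_at_top_weakI) (use assms(2) in auto)
qed (simp add: finite_subsets_at_top_neq_bot)

lemma surj_if_norm_diff_id_le:
  fixes T :: "'a::banach \<Rightarrow> 'a"
  assumes "linear T" and "0 \<le> q" and "q < 1"
    and near_id: "\<And>x. norm (x - T x) \<le> q * norm x"
  shows "surj T"
proof -
  have "z \<in> range T" for z
  proof -
    have "\<exists>!x. x - T x + z = x"
    proof (rule banach_fix_type[OF \<open>0 \<le> q\<close> \<open>q < 1\<close>], intro allI)
      fix x y
      have "(x - T x + z) - (y - T y + z) = (x - y) - T (x - y)"
        by (simp add: linear_diff[OF \<open>linear T\<close>] algebra_simps)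
      then show "dist (x - T x + z) (y - T y + z) \<le> q * dist x y"
        by (metis dist_norm near_id)
    qed
    then obtain x where "x - T x + z = x" by blast
    then have "T x = z" by (simp add: algebra_simps)
    then show ?thesis by blast
  qed
  then show ?thesis by blast
qed

lemma inj_if_norm_ge:
  fixes T :: "'a::real_normed_vector \<Rightarrow> 'b::real_normed_vector"
  assumes "linear T" and "0 < c" and below: "\<And>x. c * norm x \<le> norm (T x)"
  shows "inj T"
proof (rule injI)
  fix x y assume "T x = T y"
  then have "c * norm (x - y) \<le> 0"
    using below[of "x - y"] linear_diff[OF \<open>linear T\<close>] by simp
  then show "x = y"
    using \<open>0 < c\<close> by (simp add: mult_le_0_iff)
qed

lemma bounded_linear_inv_if_norm_ge:
  fixes T :: "'a::real_normed_vector \<Rightarrow> 'b::real_normed_vector"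
  assumes "linear T" and "surj T" and "0 < c" and below: "\<And>x. c * norm x \<le> norm (T x)"
  shows "bounded_linear (inv T)"
proof -
  have inv_eq: "inv T y = x" if "T x = y" for x y
    using inv_f_f[OF inj_if_norm_ge[OF assms(1,3) below]] that by blast
  have T_inv: "T (inv T y) = y" for y
    by (rule surj_f_inv_f[OF \<open>surj T\<close>])
  show ?thesis
  proof (rule bounded_linear_intro[where K = "1 / c"])
    show "inv T (x + y) = inv T x + inv T y" for x y
      by (rule inv_eq) (simp add: linear_add[OF \<open>linear T\<close>] T_inv)
    show "inv T (r *\<^sub>R x) = r *\<^sub>R inv T x" for r x
      by (rule inv_eq) (simp add: linear_scale[OF \<open>linear T\<close>] T_inv)
    show "norm (inv T x) \<le> norm x * (1 / c)" for x
      using below[of "inv T x"] \<open>0 < c\<close> by (simp add: T_inv field_simps)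
  qed
qed

locale krein =
  fixes smul :: "complex \<Rightarrow> 'a::{real_normed_vector,banach} \<Rightarrow> 'a"
    and ip :: "'a \<Rightarrow> 'a \<Rightarrow> complex"
    and J :: "'a \<Rightarrow> 'a"
  assumes krein_space: "krein_space smul ip J"
begin

lemma smul_mult: "smul (a * b) x = smul a (smul b x)"
  using krein_space unfolding krein_space_def by meson
lemma smul_add_left: "smul (a + b) x = smul a x + smul b x"
  using krein_space unfolding krein_space_def by meson
lemma smul_add_right: "smul a (x + y) = smul a x + smul a y"
  using krein_space unfolding krein_space_def by meson
lemma smul_of_real: "smul (complex_of_real r) x = r *\<^sub>R x"
  using krein_space unfolding krein_space_def by meson
lemma ip_add_right: "ip x (y + z) = ip x y + ip x z"
  using krein_space unfolding krein_space_def by meson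
lemma ip_smul_right: "ip x (smul c y) = c * ip x y"
  using krein_space unfolding krein_space_def by meson
lemma ip_cnj_commute: "ip y x = cnj (ip x y)"
  using krein_space unfolding krein_space_def by meson
lemma J_add: "J (x + y) = J x + J y"
  using krein_space unfolding krein_space_def by meson
lemma J_smul: "J (smul c x) = smul c (J x)"
  using krein_space unfolding krein_space_def by meson
lemma J_J [simp]: "J (J x) = x"
  using krein_space unfolding krein_space_def by meson
lemma ip_J_left: "ip (J x) y = ip x (J y)"
  using krein_space unfolding krein_space_def by meson
lemma ip_J_self: "ip x (J x) = complex_of_real ((norm x)\<^sup>2)"
  using krein_space unfolding krein_space_def by meson

lemma ip_smul_left: "ip (smul c x) y = cnj c * ip x y"
  by (metis ip_smul_right ip_cnj_commute complex_cnj_mult complex_cnj_cnj)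

lemma ip_scaleR_right: "ip x (r *\<^sub>R y) = r * ip x y"
  by (simp only: smul_of_real[symmetric] ip_smul_right)

lemma ip_zero_right [simp]: "ip x 0 = 0"
  using ip_scaleR_right[of x 0 0] by simp

lemma ip_sum_right: "ip x (sum f F) = (\<Sum>n\<in>F. ip x (f n))"
  by (induction F rule: infinite_finite_induct) (auto simp: ip_add_right)

lemma J_scaleR: "J (r *\<^sub>R x) = r *\<^sub>R J x"
  by (simp only: smul_of_real[symmetric] J_smul)

lemma J_diff: "J (x - y) = J x - J y"
  using J_add[of x "(-1) *\<^sub>R y"] J_scaleR[of "-1" y] by simp

lemma norm_J [simp]: "norm (J x) = norm x"
proof -
  have "complex_of_real ((norm (J x))\<^sup>2) = complex_of_real ((norm x)\<^sup>2)"
    by (simp only: ip_J_self[symmetric] J_J ip_J_left)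
  then show ?thesis
    by (simp only: of_real_eq_iff power2_eq_iff_nonneg norm_ge_zero)
qed

definition jinner :: "'a \<Rightarrow> 'a \<Rightarrow> real" where
  "jinner x y = Re (ip x (J y))"

lemma jinner_commute: "jinner x y = jinner y x"
proof -
  have "ip y (J x) = cnj (ip x (J y))"
    by (metis ip_J_left ip_cnj_commute)
  then show ?thesis
    unfolding jinner_def by simp
qed

lemma jinner_scaleR_right: "jinner x (r *\<^sub>R y) = r * jinner x y"
  by (simp add: jinner_def J_scaleR ip_scaleR_right)

lemma jinner_scaleR_left: "jinner (r *\<^sub>R x) y = r * jinner x y"
  by (simp only: jinner_commute[of _ y] jinner_scaleR_right)

lemma jinner_diff_right: "jinner x (y - z) = jinner x y - jinner x z"
  using ip_add_right[of x "J y" "(-1) *\<^sub>R J z"] ip_scaleR_right[of x "-1" "J z"]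
  by (simp add: jinner_def J_diff)

lemma jinner_diff_left: "jinner (x - y) z = jinner x z - jinner y z"
  by (simp only: jinner_commute[of _ z] jinner_diff_right)

lemma jinner_self: "jinner x x = (norm x)\<^sup>2"
  by (simp add: jinner_def ip_J_self)

lemma norm_diff_power2: "(norm (x - y))\<^sup>2 = (norm x)\<^sup>2 - 2 * jinner x y + (norm y)\<^sup>2"
  by (simp add: jinner_self[symmetric] jinner_diff_left jinner_diff_right jinner_commute[of y x])

lemma abs_jinner_le: "\<bar>jinner x y\<bar> \<le> norm x * norm y"
proof (cases "x = 0 \<or> y = 0")
  case True
  then show ?thesis
    using jinner_scaleR_left[of 0 0 y] jinner_scaleR_right[of x 0 0] by auto
next
  case False
  define u where "u = (1 / norm x) *\<^sub>R x"
  define v where "v = (1 / norm y) *\<^sub>R y"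
  have unit: "norm u = 1" "norm v = 1"
    using False by (auto simp: u_def v_def)
  have "0 \<le> (norm (u - v))\<^sup>2"
    by simp
  then have "jinner u v \<le> 1"
    using unit by (simp add: norm_diff_power2)
  have "0 \<le> (norm (u - (-1) *\<^sub>R v))\<^sup>2"
    by simp
  then have "- jinner u v \<le> 1"
    using unit by (simp only: norm_diff_power2 jinner_scaleR_right norm_scaleR) simp
  then have "\<bar>jinner u v\<bar> \<le> 1"
    using \<open>jinner u v \<le> 1\<close> by simp
  moreover have "jinner u v = jinner x y / (norm x * norm y)"
    by (simp add: u_def v_def jinner_scaleR_left jinner_scaleR_right)
  ultimately show ?thesis
    using False by (simp add: abs_div field_simps)
qed

lemma norm_smul: "norm (smul c x) = cmod c * norm x"
proof -
  have "complex_of_real ((norm (smul c x))\<^sup>2) = cnj c * c * complex_of_real ((norm x)\<^sup>2)"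
    by (simp only: ip_J_self[symmetric] J_smul ip_smul_right ip_smul_left mult.assoc
        mult.left_commute[of c "cnj c"])
  also have "\<dots> = complex_of_real ((cmod c * norm x)\<^sup>2)"
    by (simp only: mult.commute[of "cnj c" c] complex_norm_square[symmetric] of_real_mult
        power_mult_distrib)
  finally show ?thesis
    by (simp only: of_real_eq_iff power2_eq_iff_nonneg norm_ge_zero zero_le_mult_iff) simp
qed

lemma norm_ip_le: "cmod (ip x y) \<le> norm x * norm y"
proof (cases "ip x y = 0")
  case True
  then show ?thesis by simp
next
  case False
  define a where "a = ip x y"
  \<comment> \<open>Rotating y by the phase of [x,y] turns its modulus into a real part.\<close>
  define w where "w = smul (cnj a / cmod a) (J y)"
  have "cnj a * a = complex_of_real (cmod a * cmod a)"
    by (simp only: mult.commute[of "cnj a" a] complex_norm_square[symmetric] power2_eq_square)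
  then have "ip x (J w) = complex_of_real (cmod a)"
    using False by (simp add: w_def J_smul ip_smul_right a_def[symmetric])
  then have "jinner x w = cmod a"
    by (simp add: jinner_def)
  moreover have "norm w = norm y"
    using False by (simp add: w_def norm_smul a_def norm_divide)
  ultimately show ?thesis
    using abs_jinner_le[of x w] by (simp add: a_def)
qed

lemma bounded_linear_ip: "bounded_linear (ip x)"
proof (rule bounded_linear_intro[where K = "norm x"])
  show "ip x (y + z) = ip x y + ip x z" for y z
    by (rule ip_add_right)
  show "ip x (r *\<^sub>R y) = r *\<^sub>R ip x y" for r y
    by (simp only: ip_scaleR_right scaleR_conv_of_real)
  show "norm (ip x y) \<le> norm y * norm x" for y
    using norm_ip_le[of x y] by (simp only: mult.commute)
qed

lemma bounded_linear_smul: "bounded_linear (smul c)"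
proof (rule bounded_linear_intro[where K = "cmod c"])
  show "smul c (x + y) = smul c x + smul c y" for x y
    by (rule smul_add_right)
  show "smul c (r *\<^sub>R x) = r *\<^sub>R smul c x" for r x
    by (simp only: smul_of_real[symmetric] smul_mult[symmetric] mult.commute)
  show "norm (smul c x) \<le> norm x * cmod c" for x
    by (simp add: norm_smul mult.commute)
qed

end

locale krein_frame_bounds = krein +
  fixes kn :: "nat \<Rightarrow> 'a" and A B :: real
  assumes A_pos: "0 < A" and A_le_B: "A \<le> B"
    and frame_summable: "\<And>k. summable (\<lambda>n. (cmod (ip (kn n) k))\<^sup>2)"
    and frame_lower: "\<And>k. A * (norm k)\<^sup>2 \<le> (\<Sum>n. (cmod (ip (kn n) k))\<^sup>2)"
    and frame_upper: "\<And>k. (\<Sum>n. (cmod (ip (kn n) k))\<^sup>2) \<le> B * (norm k)\<^sup>2"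
begin

abbreviation S :: "'a \<Rightarrow> 'a" where
  "S \<equiv> frame_operator smul ip kn"

lemma B_pos: "0 < B"
  using A_pos A_le_B by simp

lemma norm_sum_synthesis_power2_le:
  assumes "finite F"
  shows "(norm (\<Sum>n\<in>F. smul (a n) (kn n)))\<^sup>2 \<le> B * (\<Sum>n\<in>F. (cmod (a n))\<^sup>2)"
proof -
  define x where "x = (\<Sum>n\<in>F. smul (a n) (kn n))"
  have "(norm x)\<^sup>2 = cmod (ip (J x) x)"
    by (simp add: ip_J_left ip_J_self del: of_real_power)
  also have "ip (J x) x = (\<Sum>n\<in>F. a n * ip (J x) (kn n))"
    by (simp add: x_def ip_sum_right ip_smul_right)
  also have "cmod \<dots> \<le> (\<Sum>n\<in>F. cmod (a n) * cmod (ip (kn n) (J x)))"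
    by (rule order.trans[OF norm_sum]) (simp add: norm_mult ip_cnj_commute[of "J x"])
  also have "\<dots> \<le> L2_set (\<lambda>n. cmod (a n)) F * L2_set (\<lambda>n. cmod (ip (kn n) (J x))) F"
    using L2_set_mult_ineq[of "\<lambda>n. cmod (a n)" "\<lambda>n. cmod (ip (kn n) (J x))" F] by simp
  also have "L2_set (\<lambda>n. cmod (ip (kn n) (J x))) F \<le> sqrt B * norm x"
  proof -
    have "(\<Sum>n\<in>F. (cmod (ip (kn n) (J x)))\<^sup>2) \<le> (\<Sum>n. (cmod (ip (kn n) (J x)))\<^sup>2)"
      by (rule sum_le_suminf[OF frame_summable assms]) auto
    also have "\<dots> \<le> B * (norm x)\<^sup>2"
      using frame_upper[of "J x"] by simp
    finally have "L2_set (\<lambda>n. cmod (ip (kn n) (J x))) F \<le> sqrt (B * (norm x)\<^sup>2)"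
      unfolding L2_set_def by (rule real_sqrt_le_mono)
    then show ?thesis
      by (simp add: real_sqrt_mult)
  qed
  finally have "(norm x)\<^sup>2 \<le> L2_set (\<lambda>n. cmod (a n)) F * (sqrt B * norm x)"
    by (simp add: L2_set_nonneg mult_left_mono)
  then have "norm x \<le> L2_set (\<lambda>n. cmod (a n)) F * sqrt B"
    using B_pos by (cases "norm x = 0") (auto simp: power2_eq_square L2_set_nonneg)
  then have "(norm x)\<^sup>2 \<le> (L2_set (\<lambda>n. cmod (a n)) F * sqrt B)\<^sup>2"
    by (simp add: power_mono)
  also have "\<dots> = B * (\<Sum>n\<in>F. (cmod (a n))\<^sup>2)"
    using B_pos by (simp add: power_mult_distrib L2_set_def sum_nonneg)
  finally show ?thesis
    by (simp add: x_def)
qed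

lemma
  assumes "summable (\<lambda>n. (cmod (a n))\<^sup>2)"
  shows synthesis_summable: "(\<lambda>n. smul (a n) (kn n)) summable_on UNIV"
    and norm_synthesis_power2_le:
      "(norm (infsum (\<lambda>n. smul (a n) (kn n)) UNIV))\<^sup>2 \<le> B * (\<Sum>n. (cmod (a n))\<^sup>2)"
proof -
  have sum_le: "(\<Sum>n\<in>F. (cmod (a n))\<^sup>2) \<le> (\<Sum>n. (cmod (a n))\<^sup>2)" if "finite F" for F
    by (rule sum_le_suminf[OF assms that]) auto
  show summable_on: "(\<lambda>n. smul (a n) (kn n)) summable_on UNIV"
  proof (rule summable_on_if_norm_sum_power2_le[where C = B])
    show "(\<lambda>n. (cmod (a n))\<^sup>2) summable_on UNIV"
      by (rule summable_nonneg_imp_summable_on_strong[OF assms]) simp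
  qed (use B_pos norm_sum_synthesis_power2_le in auto)
  have "norm (infsum (\<lambda>n. smul (a n) (kn n)) UNIV) \<le> sqrt (B * (\<Sum>n. (cmod (a n))\<^sup>2))"
  proof (rule norm_infsum_le_if_norm_sum_le[OF summable_on])
    fix F :: "nat set" assume "finite F"
    have "(norm (\<Sum>n\<in>F. smul (a n) (kn n)))\<^sup>2 \<le> B * (\<Sum>n. (cmod (a n))\<^sup>2)"
      by (rule order.trans[OF norm_sum_synthesis_power2_le[OF \<open>finite F\<close>]
          mult_left_mono[OF sum_le[OF \<open>finite F\<close>]]]) (use B_pos in simp)
    then show "norm (\<Sum>n\<in>F. smul (a n) (kn n)) \<le> sqrt (B * (\<Sum>n. (cmod (a n))\<^sup>2))"
      by (rule real_le_rsqrt)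
  qed
  from power_mono[OF this norm_ge_zero, of 2]
  show "(norm (infsum (\<lambda>n. smul (a n) (kn n)) UNIV))\<^sup>2 \<le> B * (\<Sum>n. (cmod (a n))\<^sup>2)"
    using B_pos suminf_nonneg[OF assms] by simp
qed

lemma frame_operator_has_sum: "((\<lambda>n. smul (ip (kn n) k) (kn n)) has_sum S k) UNIV"
  unfolding frame_operator_def using synthesis_summable[OF frame_summable] by simp

lemma frame_operator_eqI: "((\<lambda>n. smul (ip (kn n) k) (kn n)) has_sum y) UNIV \<Longrightarrow> S k = y"
  using frame_operator_has_sum has_sum_unique by blast

lemma ip_frame_operator_self: "ip k (S k) = complex_of_real (\<Sum>n. (cmod (ip (kn n) k))\<^sup>2)"
proof -
  have "((\<lambda>n. ip k (smul (ip (kn n) k) (kn n))) has_sum ip k (S k)) UNIV"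
    by (rule has_sum_bounded_linear[OF bounded_linear_ip frame_operator_has_sum])
  moreover have "ip k (smul (ip (kn n) k) (kn n)) = complex_of_real ((cmod (ip (kn n) k))\<^sup>2)" for n
    by (simp add: ip_smul_right ip_cnj_commute[of k] complex_norm_square del: of_real_power)
  moreover have "((\<lambda>n. complex_of_real ((cmod (ip (kn n) k))\<^sup>2)) has_sum
      complex_of_real (\<Sum>n. (cmod (ip (kn n) k))\<^sup>2)) UNIV"
    by (intro has_sum_bounded_linear[OF bounded_linear_of_real] sums_nonneg_imp_has_sum
        summable_sums frame_summable) simp
  ultimately show ?thesis
    using has_sum_unique by force
qed

lemma norm_frame_operator_power2_le:
  "(norm (S k))\<^sup>2 \<le> B * (\<Sum>n. (cmod (ip (kn n) k))\<^sup>2)"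
  unfolding frame_operator_def by (rule norm_synthesis_power2_le[OF frame_summable])

lemma frame_operator_add: "S (x + y) = S x + S y"
  by (rule frame_operator_eqI)
    (use has_sum_add[OF frame_operator_has_sum frame_operator_has_sum] in
      \<open>simp add: ip_add_right smul_add_left\<close>)

lemma frame_operator_smul: "S (smul c x) = smul c (S x)"
  by (rule frame_operator_eqI)
    (use has_sum_bounded_linear[OF bounded_linear_smul frame_operator_has_sum] in
      \<open>simp add: ip_smul_right smul_mult\<close>)

lemma linear_frame_operator: "linear S"
  by (rule linearI) (simp_all only: frame_operator_add smul_of_real[symmetric] frame_operator_smul)

lemma norm_frame_operator_ge: "A * norm k \<le> norm (S k)"
proof -
  have "A * (norm k)\<^sup>2 \<le> cmod (ip k (S k))"
    using frame_lower[of k] suminf_nonneg[OF frame_summable] by (simp add: ip_frame_operator_self)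
  also have "\<dots> \<le> norm k * norm (S k)"
    by (rule norm_ip_le)
  finally have "(A * norm k) * norm k \<le> norm (S k) * norm k"
    by (simp add: power2_eq_square algebra_simps)
  then show ?thesis
    by (cases "norm k = 0") (auto simp: A_pos mult_right_le_imp_le)
qed

lemma frame_operator_selfadjoint: "ip (S x) y = ip x (S y)"
proof -
  have "((\<lambda>n. cnj (ip y (smul (ip (kn n) x) (kn n)))) has_sum cnj (ip y (S x))) UNIV"
    by (intro has_sum_bounded_linear[OF bounded_linear_cnj]
        has_sum_bounded_linear[OF bounded_linear_ip frame_operator_has_sum])
  moreover have "cnj (ip y (smul (ip (kn n) x) (kn n))) = ip x (smul (ip (kn n) y) (kn n))" for n
    by (simp add: ip_smul_right ip_cnj_commute[of y] ip_cnj_commute[of x] mult.commute)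
  ultimately have "((\<lambda>n. ip x (smul (ip (kn n) y) (kn n))) has_sum cnj (ip y (S x))) UNIV"
    by simp
  moreover have "((\<lambda>n. ip x (smul (ip (kn n) y) (kn n))) has_sum ip x (S y)) UNIV"
    by (rule has_sum_bounded_linear[OF bounded_linear_ip frame_operator_has_sum])
  ultimately show ?thesis
    using has_sum_unique ip_cnj_commute by metis
qed

lemma norm_diff_J_frame_operator_le:
  "norm (w - (1 / B) *\<^sub>R J (S w)) \<le> sqrt (1 - A / B) * norm w"
proof -
  let ?s = "\<Sum>n. (cmod (ip (kn n) w))\<^sup>2"
  have "jinner w ((1 / B) *\<^sub>R J (S w)) = ?s / B"
    by (simp add: jinner_def J_scaleR ip_scaleR_right ip_frame_operator_self)
  moreover have "(norm ((1 / B) *\<^sub>R J (S w)))\<^sup>2 \<le> ?s / B"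
  proof -
    have "(norm ((1 / B) *\<^sub>R J (S w)))\<^sup>2 = (norm (S w))\<^sup>2 / B\<^sup>2"
      using B_pos by (simp add: power_divide)
    also have "\<dots> \<le> B * ?s / B\<^sup>2"
      by (rule divide_right_mono[OF norm_frame_operator_power2_le]) simp
    finally show ?thesis
      using B_pos by (simp add: power2_eq_square)
  qed
  ultimately have "(norm (w - (1 / B) *\<^sub>R J (S w)))\<^sup>2 \<le> (norm w)\<^sup>2 - ?s / B"
    by (simp add: norm_diff_power2)
  also have "\<dots> \<le> (norm w)\<^sup>2 - A * (norm w)\<^sup>2 / B"
    using frame_lower[of w] B_pos by (simp add: divide_right_mono)
  also have "\<dots> = (sqrt (1 - A / B) * norm w)\<^sup>2"
    using A_pos A_le_B B_pos by (simp add: power_mult_distrib field_simps)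
  finally show ?thesis
    by (rule power2_le_imp_le) (use A_pos A_le_B B_pos in simp)
qed

lemma surj_frame_operator: "surj S"
proof -
  have "surj (\<lambda>w. (1 / B) *\<^sub>R J (S w))"
  proof (rule surj_if_norm_diff_id_le[OF _ _ _ norm_diff_J_frame_operator_le])
    show "linear (\<lambda>w. (1 / B) *\<^sub>R J (S w))"
      by (rule linearI) (simp_all add: linear_add[OF linear_frame_operator]
          linear_scale[OF linear_frame_operator] J_add J_scaleR scaleR_add_right)
  qed (use A_pos A_le_B B_pos in auto)
  have "z \<in> range S" for z
  proof -
    obtain w where "(1 / B) *\<^sub>R J z = (1 / B) *\<^sub>R J (S w)"
      using surjD[OF \<open>surj _\<close>] by blast
    then have "J (J z) = J (J (S w))"
      using B_pos by simp
    then show ?thesis by simp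
  qed
  then show ?thesis by blast
qed

lemma inv_frame_operator: "S (inv S y) = y" "inv S (S x) = x"
  using surj_f_inv_f[OF surj_frame_operator]
    inv_f_f[OF inj_if_norm_ge[OF linear_frame_operator A_pos norm_frame_operator_ge]] by auto

lemma inv_frame_operator_smul: "inv S (smul c x) = smul c (inv S x)"
  by (metis inv_frame_operator frame_operator_smul)

lemma inv_frame_operator_selfadjoint: "ip (inv S a) b = ip a (inv S b)"
  by (metis inv_frame_operator(1) frame_operator_selfadjoint)

lemma frame_reconstruction:
  "((\<lambda>n. smul (ip (kn n) k) (inv S (kn n))) has_sum k) UNIV"
  "((\<lambda>n. smul (ip (inv S (kn n)) k) (kn n)) has_sum k) UNIV"
proof -
  have "bounded_linear (inv S)"
    by (rule bounded_linear_inv_if_norm_ge[OF linear_frame_operator surj_frame_operator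
          A_pos norm_frame_operator_ge])
  from has_sum_bounded_linear[OF this frame_operator_has_sum]
  show "((\<lambda>n. smul (ip (kn n) k) (inv S (kn n))) has_sum k) UNIV"
    by (simp add: inv_frame_operator inv_frame_operator_smul)
  from frame_operator_has_sum[of "inv S k"]
  show "((\<lambda>n. smul (ip (inv S (kn n)) k) (kn n)) has_sum k) UNIV"
    by (simp add: inv_frame_operator inv_frame_operator_selfadjoint)
qed

end

theorem theorem3p6:
  fixes smul :: "complex \<Rightarrow> 'a::{real_normed_vector,banach} \<Rightarrow> 'a"
    and ip :: "'a \<Rightarrow> 'a \<Rightarrow> complex"
    and J :: "'a \<Rightarrow> 'a"
    and kn :: "nat \<Rightarrow> 'a"
    and k :: 'a
  assumes "krein_space smul ip J"
    and "krein_frame ip kn"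
  shows "((\<lambda>n. smul (ip (kn n) k) (inv (frame_operator smul ip kn) (kn n))) has_sum k) UNIV \<and>
         ((\<lambda>n. smul (ip (inv (frame_operator smul ip kn) (kn n)) k) (kn n)) has_sum k) UNIV"
proof -
  from assms(2) obtain A B where "0 < A" "A \<le> B"
    and "\<forall>k. summable (\<lambda>n. (cmod (ip (kn n) k))\<^sup>2) \<and>
        A * (norm k)\<^sup>2 \<le> (\<Sum>n. (cmod (ip (kn n) k))\<^sup>2) \<and>
        (\<Sum>n. (cmod (ip (kn n) k))\<^sup>2) \<le> B * (norm k)\<^sup>2"
    unfolding krein_frame_def by blast
  then interpret krein_frame_bounds smul ip J kn A B
    using assms(1) by unfold_locales blast+
  show ?thesis
    using frame_reconstruction by blast
qed

end
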